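(* Let $\{G^k\}_{k\ge0}$ be a $B$-strongly connected sequence of digraphs on $V=\{1,\dots,I\}$ and let each $\mathbf{A}^k=(a_{ij}^k)$ be compliant with $G^k$ and column stochastic (constant $\kappa>0$). For arbitrary perturbations $\boldsymbol\varepsilon_i^k\in\mathbb{R}^m$ and initial $\mathbf{x}^0=(\mathbf{x}_{(i)}^0)_{i=1}^I$, consider the perturbed condensed push-sum protocol: $\phi_{(i)}^0=1$ and, for all $i$ and $k\ge0$, $$\phi_{(i)}^{k+1}=\sum_{j=1}^Ia_{ij}^k\phi_{(j)}^k,\qquad \mathbf{x}_{(i)}^{k+1}=\frac{1}{\phi_{(i)}^{k+1}}\sum_{j=1}^Ia_{ij}^k\phi_{(j)}^k\mathbf{x}_{(j)}^k+\boldsymbol\varepsilon_i^k.$$ Then: (a) $\phi_{lb}\triangleq\inf_k\min_i\phi_{(i)}^k\ge\kappa^{2(I-1)B}$ and $\phi_{ub}\triangleq\sup_k\max_i\phi_{(i)}^k\le I-\kappa^{2(I-1)B}$; (b) for all $k\ge0$ and $i=1,\dots,I$, $$\Big\|\mathbf{x}_{(i)}^k-\frac1I\sum_{j=1}^I\phi_{(j)}^k\mathbf{x}_{(j)}^k\Big\|\le c\Big(\rho^k\|\mathbf{x}^0\|+\sum_{t=0}^{k-1}\rho^{k-1-t}\|\boldsymbol\varepsilon^t\|\Big),$$ where $\boldsymbol\varepsilon^t=(\boldsymbol\varepsilon_i^t)_{i=1}^I$, $\tilde\kappa\triangleq\kappa\,\phi_{lb}/\phi_{ub}$, $\rho\triangleq(1-\tilde\kappa^{(I-1)B})^{1/((I-1)B)}\in(0,1)$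 and $c\triangleq\frac{2I}{\rho}\cdot\frac{2(1+\tilde\kappa^{-(I-1)B})}{1-\tilde\kappa^{(I-1)B}}$.
   Context: A digraph at time $k$ is $G^k=(V,E^k)$ with edge $(j,i)\in E^k$ meaning $j$ can send to $i$. The sequence is $B$-strongly connected if there is an integer $B>0$ such that for every $k\ge0$ the digraph with edge set $\bigcup_{t=k}^{k+B-1}E^t$ is strongly connected. $\mathbf{A}^k$ is compliant with $G^k$ (constant $\kappa>0$) if $a_{ij}^k=0$ whenever $j\ne i$ and $(j,i)\notin E^k$, $a_{ij}^k\ge\kappa$ whenever $(j,i)\in E^k$, and $a_{ii}^k\ge\kappa$ for all $i$; it is column stochastic if $\mathbf{1}^T\mathbf{A}^k=\mathbf{1}^T$ (nonnegative entries). $\|\mathbf{x}^0\|$ is the Euclidean norm of the stacked vector. *)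

theory Defs
  imports "HOL-Analysis.Analysis"
begin

text \<open>Vertices are V = {0..<I} (the paper's {1..I}, shifted). An edge (j,i) in E k means
  j can send to i at time k.\<close>

definition strongly_connected_on :: "nat \<Rightarrow> (nat \<times> nat) set \<Rightarrow> bool" where
  "strongly_connected_on I E \<longleftrightarrow>
     (\<forall>u<I. \<forall>v<I. (u, v) \<in> (E \<inter> ({..<I} \<times> {..<I}))\<^sup>*)"

definition B_strongly_connected :: "nat \<Rightarrow> nat \<Rightarrow> (nat \<Rightarrow> (nat \<times> nat) set) \<Rightarrow> bool" where
  "B_strongly_connected I B E \<longleftrightarrow> B > 0 \<and>
     (\<forall>k. strongly_connected_on I (\<Union>t\<in>{k..k+B-1}. E t))"

text \<open>A k i j is the entry a_{ij}^k.\<close>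
definition compliant :: "nat \<Rightarrow> real \<Rightarrow> (nat \<times> nat) set \<Rightarrow> (nat \<Rightarrow> nat \<Rightarrow> real) \<Rightarrow> bool" where
  "compliant I \<kappa> E A \<longleftrightarrow>
     (\<forall>i<I. \<forall>j<I. j \<noteq> i \<and> (j, i) \<notin> E \<longrightarrow> A i j = 0) \<and>
     (\<forall>i<I. \<forall>j<I. (j, i) \<in> E \<longrightarrow> A i j \<ge> \<kappa>) \<and>
     (\<forall>i<I. A i i \<ge> \<kappa>)"

definition column_stochastic :: "nat \<Rightarrow> (nat \<Rightarrow> nat \<Rightarrow> real) \<Rightarrow> bool" where
  "column_stochastic I A \<longleftrightarrow>
     (\<forall>i<I. \<forall>j<I. A i j \<ge> 0) \<and> (\<forall>j<I. (\<Sum>i<I. A i j) = 1)"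

definition stacked_norm :: "nat \<Rightarrow> (nat \<Rightarrow> 'v::real_normed_vector) \<Rightarrow> real" where
  "stacked_norm I z = sqrt (\<Sum>i<I. (norm (z i))\<^sup>2)"

end

theory Submission
  imports Defs
begin

text \<open>The push-sum update is the perturbed consensus iteration x(k+1) = W(k) x(k) + \<epsilon>(k) with
  the row-stochastic weights W(k)_ij = a(k)_ij \<phi>(k)_j / \<phi>(k+1)_i. Column stochasticity keeps
  \<Sum>_i \<phi>(k)_i = I, and B-strong connectivity makes every product of (I-1)B consecutive matrices
  entrywise positive. For the A(k) this bounds \<phi> away from 0 and I; for the W(k), whose entries on
  the support are at least \<kappa> \<phi>lb / \<phi>ub, it makes every such window shrink the spread
  max_jl \<parallel>y_j - y_l\<parallel> by the factor 1 - \<kappa>t^((I-1)B) = \<rho>^((I-1)B). By linearity x(k) is the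
  evolution of x(0) plus the evolutions of the \<epsilon>(t), and every entry of a vector lies within its
  spread of any \<phi>-weighted average of it.\<close>

lemma rtrancl_leaves_set:
  assumes "(u, w) \<in> R\<^sup>*" "u \<in> S" "w \<notin> S"
  shows "\<exists>a b. (a, b) \<in> R \<and> a \<in> S \<and> b \<notin> S"
  using assms by (induction rule: rtrancl_induct) auto

lemma card_growth_saturates:
  fixes S :: "nat \<Rightarrow> nat set"
  assumes S_Suc: "\<And>d. S d \<subseteq> S (Suc d)"
    and S_sub: "\<And>d. S d \<subseteq> {..<I}"
    and S_0: "S 0 \<noteq> {}"
    and grow: "\<And>d. S d \<noteq> {..<I} \<Longrightarrow> card (S d) < card (S (d + B))"
  shows "S ((I - 1) * B) = {..<I}"
proof -
  have mono: "S d \<subseteq> S d'" if "d \<le> d'" for d d'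
    using lift_Suc_mono_le[of S, OF S_Suc that] .
  have fin: "finite (S d)" for d
    using S_sub finite_subset by blast
  have card_ge: "min I (Suc q) \<le> card (S (q * B))" for q
  proof (induction q)
    case 0
    have "0 < card (S 0)"
      using S_0 fin[of 0] by (simp add: card_gt_0_iff)
    then show ?case by simp
  next
    case (Suc q)
    show ?case
    proof (cases "S (q * B) = {..<I}")
      case True
      then have "S (Suc q * B) = {..<I}"
        using mono[of "q * B" "Suc q * B"] S_sub by (intro equalityI) auto
      then show ?thesis by simp
    next
      case False
      from grow[OF False] Suc.IH show ?thesis by (simp add: add.commute)
    qed
  qed
  have "I \<le> card (S ((I - 1) * B))"
    using card_ge[of "I - 1"] S_0 S_sub[of 0] by (cases I) auto
  then show ?thesis
    by (metis S_sub card_lessThan card_mono card_subset_eq finite_lessThan le_antisym)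
qed

text \<open>Along a \<open>B\<close>-strongly connected sequence, the set of indices where \<open>v d\<close> is at least
  \<open>\<delta>^d\<close> never shrinks (diagonal weights) and gains a new index in every window of length \<open>B\<close>
  (an edge leaving the set), so it is everything after \<open>I - 1\<close> windows.\<close>

lemma propagation_lower_bound:
  fixes M :: "nat \<Rightarrow> nat \<Rightarrow> nat \<Rightarrow> real" and v :: "nat \<Rightarrow> nat \<Rightarrow> real"
  assumes conn: "B_strongly_connected I B E"
    and \<delta>_nonneg: "0 \<le> \<delta>"
    and M_nonneg: "\<And>d i j. i < I \<Longrightarrow> j < I \<Longrightarrow> 0 \<le> M d i j"
    and M_diag: "\<And>d i. i < I \<Longrightarrow> \<delta> \<le> M d i i"
    and M_edge: "\<And>d i j. i < I \<Longrightarrow> j < I \<Longrightarrow> (j, i) \<in> E (r + d) \<Longrightarrow> \<delta> \<le> M d i j"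
    and v_Suc: "\<And>d i. i < I \<Longrightarrow> v (Suc d) i = (\<Sum>l<I. M d i l * v d l)"
    and v_0_nonneg: "\<And>i. i < I \<Longrightarrow> 0 \<le> v 0 i"
    and j: "j < I" "1 \<le> v 0 j"
    and i: "i < I"
  shows "\<delta> ^ ((I - 1) * B) \<le> v ((I - 1) * B) i"
proof -
  have "\<forall>i<I. 0 \<le> v d i" for d
    by (induction d) (auto simp: v_Suc v_0_nonneg intro!: sum_nonneg mult_nonneg_nonneg M_nonneg)
  then have v_nonneg: "\<And>d i. i < I \<Longrightarrow> 0 \<le> v d i" by blast
  have step: "\<delta> ^ Suc d \<le> v (Suc d) i"
    if "i < I" "l < I" "\<delta> \<le> M d i l" "\<delta> ^ d \<le> v d l" for d i l
  proof -
    have "\<delta> ^ Suc d \<le> M d i l * v d l"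
      using that \<delta>_nonneg by (simp add: mult_mono)
    also have "\<dots> \<le> (\<Sum>l<I. M d i l * v d l)"
      using that by (intro member_le_sum) (auto intro: mult_nonneg_nonneg M_nonneg v_nonneg)
    finally show ?thesis using v_Suc[OF that(1)] by simp
  qed
  define S where "S d = {i. i < I \<and> \<delta> ^ d \<le> v d i}" for d
  have S_Suc: "S d \<subseteq> S (Suc d)" for d
    unfolding S_def using step M_diag by auto
  have S_mono: "S d \<subseteq> S d'" if "d \<le> d'" for d d'
    using lift_Suc_mono_le[of S, OF S_Suc that] .
  have j_S: "j \<in> S d" for d
    using S_mono[of 0 d] j unfolding S_def by auto
  have B_pos: "B > 0"
    using conn unfolding B_strongly_connected_def by simp
  have grow: "card (S d) < card (S (d + B))" if "S d \<noteq> {..<I}" for d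
  proof -
    have "S d \<subseteq> {..<I}"
      unfolding S_def by auto
    with that obtain w where w: "w < I" "w \<notin> S d"
      by blast
    let ?U = "\<Union>t\<in>{r + d..r + d + B - 1}. E t"
    have "(j, w) \<in> (?U \<inter> {..<I} \<times> {..<I})\<^sup>*"
      using conn j w unfolding B_strongly_connected_def strongly_connected_on_def by blast
    from rtrancl_leaves_set[OF this j_S[of d] w(2)]
    obtain a b t where ab: "a < I" "b < I" "a \<in> S d" "b \<notin> S d" "(a, b) \<in> E t"
      and t: "r + d \<le> t" "t < r + d + B"
      using B_pos by auto
    define q where "q = t - (r + d)"
    have q: "t = r + (d + q)" "q < B"
      using t unfolding q_def by auto
    have "a \<in> S (d + q)"
      using S_mono[of d "d + q"] ab(3) by auto
    then have "b \<in> S (Suc (d + q))"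
      using step[of b a "d + q"] M_edge[of b a "d + q"] ab q unfolding S_def by auto
    then have "b \<in> S (d + B)"
      using S_mono[of "Suc (d + q)" "d + B"] q by auto
    then have "insert b (S d) \<subseteq> S (d + B)"
      using S_mono[of d "d + B"] by auto
    then show ?thesis
      using ab(4) card_mono[of "S (d + B)" "insert b (S d)"] unfolding S_def by simp
  qed
  have "S ((I - 1) * B) = {..<I}"
    by (rule card_growth_saturates[OF S_Suc _ _ grow]) (use j in \<open>auto simp: S_def\<close>)
  then show ?thesis
    using i unfolding S_def by auto
qed

text \<open>Pairing every unit of mass of a with every unit of mass of b:
  T (\<Sum>_j a_j y_j - \<Sum>_k b_k y_k) = \<Sum>_jk a_j b_k (y_j - y_k).\<close>

lemma equal_mass_sums_diff_le:
  fixes y :: "nat \<Rightarrow> 'a::real_normed_vector"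
  assumes a_nonneg: "\<And>j. j < I \<Longrightarrow> 0 \<le> a j" and a_sum: "(\<Sum>j<I. a j) = T"
    and b_nonneg: "\<And>j. j < I \<Longrightarrow> 0 \<le> b j" and b_sum: "(\<Sum>j<I. b j) = T"
    and diam: "\<And>j k. j < I \<Longrightarrow> k < I \<Longrightarrow> norm (y j - y k) \<le> D"
  shows "norm ((\<Sum>j<I. a j *\<^sub>R y j) - (\<Sum>j<I. b j *\<^sub>R y j)) \<le> T * D"
proof (cases "T = 0")
  case True
  then have "\<forall>j\<in>{..<I}. a j = 0" "\<forall>j\<in>{..<I}. b j = 0"
    using a_sum b_sum a_nonneg b_nonneg sum_nonneg_eq_0_iff[of "{..<I}"] by auto
  then show ?thesis using True by simp
next
  case False
  let ?X = "(\<Sum>j<I. a j *\<^sub>R y j) - (\<Sum>k<I. b k *\<^sub>R y k)"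
  have T_pos: "0 < T"
    using False a_sum a_nonneg sum_nonneg[of "{..<I}" a] by fastforce
  have "(\<Sum>j<I. \<Sum>k<I. (a j * b k) *\<^sub>R (y j - y k))
      = (\<Sum>j<I. \<Sum>k<I. (a j * b k) *\<^sub>R y j) - (\<Sum>j<I. \<Sum>k<I. (a j * b k) *\<^sub>R y k)"
    by (simp add: scaleR_diff_right sum_subtractf)
  also have "(\<Sum>j<I. \<Sum>k<I. (a j * b k) *\<^sub>R y j) = (\<Sum>j<I. (a j * T) *\<^sub>R y j)"
    using b_sum by (simp add: scaleR_sum_left[symmetric] sum_distrib_left[symmetric])
  also have "(\<Sum>j<I. \<Sum>k<I. (a j * b k) *\<^sub>R y k) = (\<Sum>k<I. \<Sum>j<I. (a j * b k) *\<^sub>R y k)"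
    by (rule sum.swap)
  also have "\<dots> = (\<Sum>k<I. (T * b k) *\<^sub>R y k)"
    using a_sum by (simp add: scaleR_sum_left[symmetric] sum_distrib_right[symmetric])
  finally have pairing: "T *\<^sub>R ?X = (\<Sum>j<I. \<Sum>k<I. (a j * b k) *\<^sub>R (y j - y k))"
    by (simp add: scaleR_diff_right scaleR_sum_right mult.commute)
  have "T * norm ?X = norm (T *\<^sub>R ?X)"
    using T_pos by simp
  also have "\<dots> \<le> (\<Sum>j<I. \<Sum>k<I. norm ((a j * b k) *\<^sub>R (y j - y k)))"
    unfolding pairing by (rule order.trans[OF norm_sum sum_mono]) (rule norm_sum)
  also have "\<dots> \<le> (\<Sum>j<I. \<Sum>k<I. (a j * b k) * D)"
    by (intro sum_mono) (use a_nonneg b_nonneg diam in \<open>auto intro!: mult_left_mono mult_nonneg_nonneg\<close>)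
  also have "\<dots> = T * (T * D)"
    using a_sum b_sum by (simp add: sum_distrib_right[symmetric] sum_distrib_left[symmetric] mult.assoc)
  finally show ?thesis
    using T_pos by simp
qed

lemma row_stochastic_contraction:
  fixes p :: "nat \<Rightarrow> nat \<Rightarrow> real" and y :: "nat \<Rightarrow> 'a::real_normed_vector"
  assumes p_ge: "\<And>i j. i < I \<Longrightarrow> j < I \<Longrightarrow> \<delta> \<le> p i j"
    and p_rows: "\<And>i. i < I \<Longrightarrow> (\<Sum>j<I. p i j) = 1"
    and diam: "\<And>j k. j < I \<Longrightarrow> k < I \<Longrightarrow> norm (y j - y k) \<le> D"
    and i: "i < I" and l: "l < I"
  shows "norm ((\<Sum>j<I. p i j *\<^sub>R y j) - (\<Sum>j<I. p l j *\<^sub>R y j)) \<le> (1 - real I * \<delta>) * D"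
proof -
  have common: "(\<Sum>j<I. p a j *\<^sub>R y j) = \<delta> *\<^sub>R (\<Sum>j<I. y j) + (\<Sum>j<I. (p a j - \<delta>) *\<^sub>R y j)" for a
    by (simp add: scaleR_diff_left sum_subtractf scaleR_sum_right)
  have "norm ((\<Sum>j<I. (p i j - \<delta>) *\<^sub>R y j) - (\<Sum>j<I. (p l j - \<delta>) *\<^sub>R y j)) \<le> (1 - real I * \<delta>) * D"
    by (rule equal_mass_sums_diff_le)
      (use p_ge p_rows i l diam in \<open>auto simp: sum_subtractf\<close>)
  then show ?thesis
    by (simp add: common[of i] common[of l])
qed

lemma weighted_average_deviation_le:
  fixes y :: "nat \<Rightarrow> 'a::real_normed_vector"
  assumes f_nonneg: "\<And>j. j < I \<Longrightarrow> 0 \<le> f j" and f_sum: "(\<Sum>j<I. f j) = real I"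
    and diam: "\<And>j k. j < I \<Longrightarrow> k < I \<Longrightarrow> norm (y j - y k) \<le> D" and i: "i < I"
  shows "norm (y i - (1 / real I) *\<^sub>R (\<Sum>j<I. f j *\<^sub>R y j)) \<le> D"
proof -
  have I_pos: "0 < real I" using i by simp
  have "y i = (1 / real I) *\<^sub>R (\<Sum>j<I. f j *\<^sub>R y i)"
    using I_pos by (simp add: scaleR_sum_left[symmetric] f_sum)
  then have "y i - (1 / real I) *\<^sub>R (\<Sum>j<I. f j *\<^sub>R y j) = (1 / real I) *\<^sub>R (\<Sum>j<I. f j *\<^sub>R (y i - y j))"
    by (simp add: scaleR_diff_right sum_subtractf)
  also have "norm \<dots> \<le> (1 / real I) * (\<Sum>j<I. norm (f j *\<^sub>R (y i - y j)))"
    using norm_sum[of "\<lambda>j. f j *\<^sub>R (y i - y j)" "{..<I}"] by (simp add: divide_right_mono)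
  also have "\<dots> \<le> (1 / real I) * (\<Sum>j<I. f j * D)"
    using f_nonneg diam i by (intro mult_left_mono sum_mono) (auto intro: mult_left_mono)
  also have "\<dots> = D"
    using I_pos by (simp add: sum_distrib_right[symmetric] f_sum)
  finally show ?thesis .
qed

lemma stacked_norm_nonneg: "0 \<le> stacked_norm I w"
  by (simp add: stacked_norm_def sum_nonneg)

lemma norm_le_stacked_norm:
  fixes w :: "nat \<Rightarrow> 'a::real_normed_vector"
  assumes "j < I"
  shows "norm (w j) \<le> stacked_norm I w"
proof -
  have "(norm (w j))\<^sup>2 \<le> (\<Sum>i<I. (norm (w i))\<^sup>2)"
    using assms by (intro member_le_sum) auto
  then show ?thesis
    unfolding stacked_norm_def by (metis real_le_rsqrt)
qed

lemma norm_diff_le_stacked_norm: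
  fixes w :: "nat \<Rightarrow> 'a::real_normed_vector"
  assumes "j < I" "k < I"
  shows "norm (w j - w k) \<le> 2 * stacked_norm I w"
  using norm_triangle_ineq4[of "w j" "w k"] norm_le_stacked_norm[OF assms(1), of w]
    norm_le_stacked_norm[OF assms(2), of w]
  by simp

lemma power_div_le_power:
  fixes \<rho> :: real
  assumes "0 < \<rho>" "\<rho> \<le> 1" "n > 0"
  shows "(\<rho> ^ n) ^ (d div n) \<le> \<rho> ^ d / \<rho> ^ n"
proof -
  have "\<rho> ^ d = (\<rho> ^ n) ^ (d div n) * \<rho> ^ (d mod n)"
    by (metis div_mult_mod_eq power_add power_mult mult.commute)
  moreover have "\<rho> ^ n \<le> \<rho> ^ (d mod n)"
    using assms by (intro power_decreasing) auto
  ultimately show ?thesis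
    using assms by (simp add: pos_le_divide_eq mult_left_mono)
qed

fun evolve :: "nat \<Rightarrow> (nat \<Rightarrow> nat \<Rightarrow> nat \<Rightarrow> real) \<Rightarrow> nat \<Rightarrow> (nat \<Rightarrow> 'a::real_vector) \<Rightarrow> nat \<Rightarrow> nat \<Rightarrow> 'a"
where
  "evolve I W s w 0 = w"
| "evolve I W s w (Suc d) = (\<lambda>i. \<Sum>l<I. W (s + d) i l *\<^sub>R evolve I W s w d l)"

lemma evolve_add: "evolve I W s w (n + d) = evolve I W (s + n) (evolve I W s w n) d"
  by (induction d) (simp_all add: add.assoc)

definition transition :: "nat \<Rightarrow> (nat \<Rightarrow> nat \<Rightarrow> nat \<Rightarrow> real) \<Rightarrow> nat \<Rightarrow> nat \<Rightarrow> nat \<Rightarrow> nat \<Rightarrow> real" where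
  "transition I W s d i j = evolve I W s (\<lambda>l. if l = j then 1 else 0) d i"

lemma transition_Suc:
  "transition I W s (Suc d) i j = (\<Sum>l<I. W (s + d) i l * transition I W s d l j)"
  by (simp add: transition_def)

lemma evolve_eq_transition_sum:
  "i < I \<Longrightarrow> evolve I W s w d i = (\<Sum>j<I. transition I W s d i j *\<^sub>R w j)"
proof (induction d arbitrary: i)
  case 0
  have "(\<Sum>j<I. transition I W s 0 i j *\<^sub>R w j) = (\<Sum>j<I. if i = j then w j else 0)"
    by (rule sum.cong) (simp_all add: transition_def)
  then show ?case using 0 by simp
next
  case (Suc d)
  have "evolve I W s w (Suc d) i = (\<Sum>l<I. \<Sum>j<I. (W (s + d) i l * transition I W s d l j) *\<^sub>R w j)"
    using Suc.IH by (simp add: scaleR_sum_right)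
  also have "\<dots> = (\<Sum>j<I. \<Sum>l<I. (W (s + d) i l * transition I W s d l j) *\<^sub>R w j)"
    by (rule sum.swap)
  also have "\<dots> = (\<Sum>j<I. transition I W s (Suc d) i j *\<^sub>R w j)"
    by (simp add: transition_Suc scaleR_sum_left)
  finally show ?case .
qed

lemma affine_recursion_superposition:
  fixes x e :: "nat \<Rightarrow> nat \<Rightarrow> 'a::real_vector"
  assumes x_Suc: "\<And>k i. i < I \<Longrightarrow> x (Suc k) i = (\<Sum>j<I. W k i j *\<^sub>R x k j) + e k i"
  shows "i < I \<Longrightarrow> x k i = evolve I W 0 (x 0) k i + (\<Sum>t<k. evolve I W (Suc t) (e t) (k - Suc t) i)"
proof (induction k arbitrary: i)
  case 0
  then show ?case by simp
next
  case (Suc k)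
  have evolve_Suc: "evolve I W (Suc t) w (Suc k - Suc t) i
      = (\<Sum>j<I. W k i j *\<^sub>R evolve I W (Suc t) w (k - Suc t) j)" if "t < k" for t and w :: "nat \<Rightarrow> 'a"
  proof -
    have "Suc k - Suc t = Suc (k - Suc t)" "Suc t + (k - Suc t) = k"
      using that by simp_all
    then show ?thesis by simp
  qed
  have "x (Suc k) i = evolve I W 0 (x 0) (Suc k) i
      + (\<Sum>t<k. \<Sum>j<I. W k i j *\<^sub>R evolve I W (Suc t) (e t) (k - Suc t) j) + e k i"
    using Suc
    by (simp add: x_Suc scaleR_right_distrib sum.distrib scaleR_sum_right sum.swap[of _ "{..<I}"])
  also have "(\<Sum>t<k. \<Sum>j<I. W k i j *\<^sub>R evolve I W (Suc t) (e t) (k - Suc t) j)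
      = (\<Sum>t<k. evolve I W (Suc t) (e t) (Suc k - Suc t) i)"
    by (rule sum.cong[OF refl], rule evolve_Suc[symmetric]) simp
  also have "evolve I W 0 (x 0) (Suc k) i + (\<Sum>t<k. evolve I W (Suc t) (e t) (Suc k - Suc t) i) + e k i
      = evolve I W 0 (x 0) (Suc k) i + (\<Sum>t<Suc k. evolve I W (Suc t) (e t) (Suc k - Suc t) i)"
    by simp
  finally show ?case .
qed

locale B_connected_averaging =
  fixes I B :: nat and E :: "nat \<Rightarrow> (nat \<times> nat) set" and W :: "nat \<Rightarrow> nat \<Rightarrow> nat \<Rightarrow> real"
    and \<delta> :: real
  assumes I_ge_2: "I \<ge> 2"
    and B_conn: "B_strongly_connected I B E"
    and \<delta>_nonneg: "0 \<le> \<delta>"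
    and W_nonneg: "\<And>k i j. i < I \<Longrightarrow> j < I \<Longrightarrow> 0 \<le> W k i j"
    and W_row_sum: "\<And>k i. i < I \<Longrightarrow> (\<Sum>j<I. W k i j) = 1"
    and W_diag: "\<And>k i. i < I \<Longrightarrow> \<delta> \<le> W k i i"
    and W_edge: "\<And>k i j. i < I \<Longrightarrow> j < I \<Longrightarrow> (j, i) \<in> E k \<Longrightarrow> \<delta> \<le> W k i j"
begin

lemma window_pos: "0 < (I - 1) * B"
  using I_ge_2 B_conn unfolding B_strongly_connected_def by simp

lemma \<delta>_le_half: "\<delta> \<le> 1 / 2"
proof -
  have "strongly_connected_on I (\<Union>t\<in>{0..0 + B - 1}. E t)"
    using B_conn unfolding B_strongly_connected_def by blast
  then have "(0, 1) \<in> ((\<Union>t\<in>{0..0 + B - 1}. E t) \<inter> {..<I} \<times> {..<I})\<^sup>*"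
    using I_ge_2 unfolding strongly_connected_on_def by auto
  from rtrancl_leaves_set[OF this, of "{0}"]
  obtain b t where "(0, b) \<in> E t" "b < I" "b \<noteq> 0"
    by auto
  then have "\<delta> + \<delta> \<le> W t b b + W t b 0"
    using W_diag[of b t] W_edge[of b 0 t] by simp
  also have "\<dots> = (\<Sum>j\<in>{b, 0}. W t b j)"
    using \<open>b \<noteq> 0\<close> by simp
  also have "\<dots> \<le> (\<Sum>j<I. W t b j)"
    using \<open>b < I\<close> I_ge_2 W_nonneg by (intro sum_mono2) auto
  finally show ?thesis
    using W_row_sum[OF \<open>b < I\<close>] by simp
qed

lemma transition_row_sum: "i < I \<Longrightarrow> (\<Sum>j<I. transition I W s d i j) = 1"
proof (induction d arbitrary: i)
  case 0
  then show ?case by (simp add: transition_def)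
next
  case (Suc d)
  have "(\<Sum>j<I. transition I W s (Suc d) i j) = (\<Sum>j<I. \<Sum>l<I. W (s + d) i l * transition I W s d l j)"
    by (simp add: transition_Suc)
  also have "\<dots> = (\<Sum>l<I. \<Sum>j<I. W (s + d) i l * transition I W s d l j)"
    by (rule sum.swap)
  also have "\<dots> = 1"
    using Suc by (simp add: sum_distrib_left[symmetric] W_row_sum)
  finally show ?case .
qed

lemma transition_window_ge:
  "i < I \<Longrightarrow> j < I \<Longrightarrow> \<delta> ^ ((I - 1) * B) \<le> transition I W s ((I - 1) * B) i j"
  by (rule propagation_lower_bound[where E=E and M="\<lambda>d. W (s + d)" and r=s and j=j, OF B_conn \<delta>_nonneg])
    (auto simp: W_nonneg W_diag W_edge transition_Suc transition_def)

lemma evolve_diameter_le: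
  assumes "\<And>j k. j < I \<Longrightarrow> k < I \<Longrightarrow> norm (w j - w k) \<le> D"
  shows "j < I \<Longrightarrow> k < I \<Longrightarrow> norm (evolve I W s w d j - evolve I W s w d k) \<le> D"
proof (induction d arbitrary: j k)
  case 0
  then show ?case using assms by simp
next
  case (Suc d)
  have "norm ((\<Sum>l<I. W (s + d) j l *\<^sub>R evolve I W s w d l) - (\<Sum>l<I. W (s + d) k l *\<^sub>R evolve I W s w d l))
      \<le> (1 - real I * 0) * D"
    by (rule row_stochastic_contraction) (use Suc W_nonneg W_row_sum in auto)
  then show ?case by simp
qed

lemma evolve_window_contraction:
  assumes diam: "\<And>j k. j < I \<Longrightarrow> k < I \<Longrightarrow> norm (w j - w k) \<le> D" and "0 \<le> D"
    and "j < I" "k < I"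
  shows "norm (evolve I W s w ((I - 1) * B) j - evolve I W s w ((I - 1) * B) k)
    \<le> (1 - \<delta> ^ ((I - 1) * B)) * D"
proof -
  let ?n = "(I - 1) * B"
  have "norm ((\<Sum>l<I. transition I W s ?n j l *\<^sub>R w l) - (\<Sum>l<I. transition I W s ?n k l *\<^sub>R w l))
      \<le> (1 - real I * \<delta> ^ ?n) * D"
    by (rule row_stochastic_contraction)
      (use transition_window_ge transition_row_sum diam assms in auto)
  also have "\<dots> \<le> (1 - \<delta> ^ ?n) * D"
  proof (rule mult_right_mono)
    have "1 * \<delta> ^ ?n \<le> real I * \<delta> ^ ?n"
      using I_ge_2 \<delta>_nonneg by (intro mult_right_mono) auto
    then show "1 - real I * \<delta> ^ ?n \<le> 1 - \<delta> ^ ?n" by simp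
  qed fact
  finally show ?thesis
    using assms by (simp add: evolve_eq_transition_sum)
qed

lemma evolve_diameter_contraction:
  fixes w :: "nat \<Rightarrow> 'a::real_normed_vector"
  assumes "\<And>j k. j < I \<Longrightarrow> k < I \<Longrightarrow> norm (w j - w k) \<le> D" "0 \<le> D"
  shows "j < I \<Longrightarrow> k < I \<Longrightarrow> norm (evolve I W s w d j - evolve I W s w d k)
           \<le> (1 - \<delta> ^ ((I - 1) * B)) ^ (d div ((I - 1) * B)) * D"
  using assms
proof (induction d arbitrary: s w D j k rule: less_induct)
  case (less d)
  let ?n = "(I - 1) * B" and ?r = "1 - \<delta> ^ ((I - 1) * B)"
  have r_nonneg: "0 \<le> ?r"
    using \<delta>_le_half \<delta>_nonneg by (simp add: power_le_one)
  show ?case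
  proof (cases "d < ?n")
    case True
    then show ?thesis
      using evolve_diameter_le[of w D, OF less.prems(3)] less.prems(1,2) by simp
  next
    case False
    let ?w = "evolve I W s w ?n"
    have shorter: "d - ?n < d"
      using window_pos False by (intro diff_less) linarith+
    have "evolve I W s w d = evolve I W (s + ?n) ?w (d - ?n)"
      using evolve_add[of I W s w ?n "d - ?n"] False by simp
    moreover have "norm (evolve I W (s + ?n) ?w (d - ?n) j - evolve I W (s + ?n) ?w (d - ?n) k)
        \<le> ?r ^ ((d - ?n) div ?n) * (?r * D)"
      using shorter less.prems r_nonneg evolve_window_contraction[of w D]
      by (intro less.IH) auto
    moreover have "d div ?n = Suc ((d - ?n) div ?n)"
      using window_pos False by (intro le_div_geq) simp_all
    ultimately show ?thesis by (simp add: ac_simps)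
  qed
qed

lemma window_power_lt_1: "\<delta> ^ ((I - 1) * B) < 1"
  using \<delta>_le_half \<delta>_nonneg window_pos by (simp add: power_less_one_iff)

definition rate :: real where
  "rate = (1 - \<delta> ^ ((I - 1) * B)) powr (1 / real ((I - 1) * B))"

lemma rate_power: "rate ^ ((I - 1) * B) = 1 - \<delta> ^ ((I - 1) * B)"
proof -
  have "0 < 1 - \<delta> ^ ((I - 1) * B)"
    using window_power_lt_1 by simp
  then show ?thesis
    using window_pos by (simp add: rate_def powr_realpow[symmetric] powr_powr)
qed

lemma rate_pos: "0 < rate"
  using window_power_lt_1 by (simp add: rate_def)

lemma rate_le_1: "rate \<le> 1"
  using window_power_lt_1 \<delta>_nonneg unfolding rate_def by (intro powr_le1) auto

lemma rate_lt_1: "0 < \<delta> \<Longrightarrow> rate < 1"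
  using window_power_lt_1 window_pos unfolding rate_def by (subst powr01_less_one) auto

lemma evolve_deviation_le:
  fixes w :: "nat \<Rightarrow> 'a::real_normed_vector"
  assumes "\<And>j. j < I \<Longrightarrow> 0 \<le> f j" "(\<Sum>j<I. f j) = real I" "i < I"
  shows "norm (evolve I W s w d i - (1 / real I) *\<^sub>R (\<Sum>j<I. f j *\<^sub>R evolve I W s w d j))
    \<le> 2 / (1 - \<delta> ^ ((I - 1) * B)) * (rate ^ d * stacked_norm I w)"
proof -
  let ?n = "(I - 1) * B"
  have "norm (evolve I W s w d i - (1 / real I) *\<^sub>R (\<Sum>j<I. f j *\<^sub>R evolve I W s w d j))
      \<le> (rate ^ ?n) ^ (d div ?n) * (2 * stacked_norm I w)"
    unfolding rate_power
    using assms stacked_norm_nonneg norm_diff_le_stacked_norm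
    by (intro weighted_average_deviation_le evolve_diameter_contraction) auto
  also have "\<dots> \<le> rate ^ d / rate ^ ?n * (2 * stacked_norm I w)"
    using rate_pos rate_le_1 window_pos stacked_norm_nonneg
    by (intro mult_right_mono power_div_le_power) auto
  also have "\<dots> = 2 / (1 - \<delta> ^ ?n) * (rate ^ d * stacked_norm I w)"
    unfolding rate_power by simp
  finally show ?thesis .
qed

end

locale push_sum =
  fixes I B :: nat and \<kappa> :: real and E :: "nat \<Rightarrow> (nat \<times> nat) set"
    and A :: "nat \<Rightarrow> nat \<Rightarrow> nat \<Rightarrow> real" and \<phi> :: "nat \<Rightarrow> nat \<Rightarrow> real"
  assumes I_ge_2: "I \<ge> 2"
    and \<kappa>_pos: "\<kappa> > 0"
    and B_conn: "B_strongly_connected I B E"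
    and A_compliant: "\<And>k. compliant I \<kappa> (E k) (A k)"
    and A_column_stochastic: "\<And>k. column_stochastic I (A k)"
    and \<phi>_0: "\<And>i. i < I \<Longrightarrow> \<phi> 0 i = 1"
    and \<phi>_Suc: "\<And>k i. i < I \<Longrightarrow> \<phi> (Suc k) i = (\<Sum>j<I. A k i j * \<phi> k j)"
begin

lemma A_nonneg: "i < I \<Longrightarrow> j < I \<Longrightarrow> 0 \<le> A k i j"
  using A_column_stochastic unfolding column_stochastic_def by blast

lemma A_column_sum: "j < I \<Longrightarrow> (\<Sum>i<I. A k i j) = 1"
  using A_column_stochastic unfolding column_stochastic_def by blast

lemma A_diag_ge: "i < I \<Longrightarrow> \<kappa> \<le> A k i i"
  using A_compliant unfolding compliant_def by blast

lemma A_edge_ge: "i < I \<Longrightarrow> j < I \<Longrightarrow> (j, i) \<in> E k \<Longrightarrow> \<kappa> \<le> A k i j"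
  using A_compliant unfolding compliant_def by blast

lemma index_set_nonempty: "{..<I} \<noteq> {}"
proof -
  have "0 \<in> {..<I}"
    using I_ge_2 by simp
  then show ?thesis by blast
qed

lemma \<kappa>_le_1: "\<kappa> \<le> 1"
proof -
  have "A 0 0 0 \<le> (\<Sum>i<I. A 0 i 0)"
    using I_ge_2 A_nonneg by (intro member_le_sum) auto
  then show ?thesis
    using A_diag_ge[of 0 0] A_column_sum[of 0 0] I_ge_2 by simp
qed

lemma \<phi>_sum: "(\<Sum>i<I. \<phi> k i) = real I"
proof (induction k)
  case 0
  then show ?case by (simp add: \<phi>_0)
next
  case (Suc k)
  have "(\<Sum>i<I. \<phi> (Suc k) i) = (\<Sum>i<I. \<Sum>j<I. A k i j * \<phi> k j)"
    by (simp add: \<phi>_Suc)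
  also have "\<dots> = (\<Sum>j<I. \<Sum>i<I. A k i j * \<phi> k j)"
    by (rule sum.swap)
  also have "\<dots> = (\<Sum>j<I. \<phi> k j)"
    by (simp add: sum_distrib_right[symmetric] A_column_sum)
  finally show ?case using Suc by simp
qed

lemma \<phi>_nonneg: "i < I \<Longrightarrow> 0 \<le> \<phi> k i"
  by (induction k arbitrary: i) (auto simp: \<phi>_0 \<phi>_Suc intro!: sum_nonneg mult_nonneg_nonneg A_nonneg)

lemma \<phi>_ge_\<kappa>_power: "i < I \<Longrightarrow> \<kappa> ^ k \<le> \<phi> k i"
proof (induction k arbitrary: i)
  case 0
  then show ?case by (simp add: \<phi>_0)
next
  case (Suc k)
  have "\<kappa> * \<kappa> ^ k \<le> A k i i * \<phi> k i"
    using Suc A_diag_ge A_nonneg \<kappa>_pos by (intro mult_mono) auto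
  then have "\<kappa> ^ Suc k \<le> A k i i * \<phi> k i"
    by simp
  also have "\<dots> \<le> (\<Sum>j<I. A k i j * \<phi> k j)"
    using Suc.prems A_nonneg \<phi>_nonneg by (intro member_le_sum) auto
  finally show ?case
    using \<phi>_Suc[OF Suc.prems] by simp
qed

lemma \<phi>_ge_1_somewhere: "\<exists>j<I. 1 \<le> \<phi> k j"
proof (rule ccontr)
  assume "\<not> ?thesis"
  then have "(\<Sum>j<I. \<phi> k j) < (\<Sum>j<I. 1)"
    using index_set_nonempty by (intro sum_strict_mono) auto
  then show False
    using \<phi>_sum[of k] by simp
qed

lemma \<phi>_lower_bound:
  assumes i: "i < I"
  shows "\<kappa> ^ ((I - 1) * B) \<le> \<phi> k i"
proof (cases "k < (I - 1) * B")
  case True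
  have "\<kappa> ^ ((I - 1) * B) \<le> \<kappa> ^ k"
    using True \<kappa>_pos \<kappa>_le_1 by (intro power_decreasing) auto
  then show ?thesis
    using \<phi>_ge_\<kappa>_power[OF i, of k] by linarith
next
  case False
  define r where "r = k - (I - 1) * B"
  obtain j where j: "j < I" "1 \<le> \<phi> r j"
    using \<phi>_ge_1_somewhere by blast
  have "\<kappa> ^ ((I - 1) * B) \<le> \<phi> (r + (I - 1) * B) i"
    by (rule propagation_lower_bound[where v="\<lambda>d. \<phi> (r + d)" and M="\<lambda>d. A (r + d)", OF B_conn])
      (use \<kappa>_pos A_nonneg A_diag_ge A_edge_ge \<phi>_nonneg \<phi>_Suc j i in auto)
  then show ?thesis
    using False unfolding r_def by simp
qed

lemma \<phi>_pos: "i < I \<Longrightarrow> 0 < \<phi> k i"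
  using \<phi>_lower_bound \<kappa>_pos by (meson less_le_trans zero_less_power)

lemma \<phi>_upper_bound:
  assumes i: "i < I"
  shows "\<phi> k i \<le> real I - \<kappa> ^ ((I - 1) * B)"
proof -
  define j where "j = (if i = 0 then 1 else 0 :: nat)"
  have j: "j < I" "j \<noteq> i"
    using I_ge_2 i unfolding j_def by auto
  have "\<phi> k i + \<phi> k j = (\<Sum>a\<in>{i, j}. \<phi> k a)"
    using j by simp
  also have "\<dots> \<le> (\<Sum>a<I. \<phi> k a)"
    using i j \<phi>_nonneg by (intro sum_mono2) auto
  finally show ?thesis
    using \<phi>_sum \<phi>_lower_bound[OF j(1), of k] by simp
qed

definition \<phi>lb :: real where
  "\<phi>lb = (INF k. Min ((\<lambda>i. \<phi> k i) ` {..<I}))"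

definition \<phi>ub :: real where
  "\<phi>ub = (SUP k. Max ((\<lambda>i. \<phi> k i) ` {..<I}))"

lemma \<phi>lb_lower_bound: "\<kappa> ^ ((I - 1) * B) \<le> \<phi>lb"
  unfolding \<phi>lb_def using index_set_nonempty \<phi>_lower_bound by (intro cINF_greatest Min.boundedI) auto

lemma \<phi>lb_le:
  assumes i: "i < I"
  shows "\<phi>lb \<le> \<phi> k i"
proof -
  have "\<phi>lb \<le> Min ((\<lambda>i. \<phi> k i) ` {..<I})"
    unfolding \<phi>lb_def using \<phi>_lower_bound index_set_nonempty
    by (intro cINF_lower bdd_belowI2[where m="\<kappa> ^ ((I - 1) * B)"] Min.boundedI) auto
  also have "\<dots> \<le> \<phi> k i"
    using i by (intro Min_le) auto
  finally show ?thesis .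
qed

lemma \<phi>ub_upper_bound: "\<phi>ub \<le> real I - \<kappa> ^ ((I - 1) * B)"
  unfolding \<phi>ub_def using index_set_nonempty \<phi>_upper_bound by (intro cSUP_least Max.boundedI) auto

lemma \<phi>_le_\<phi>ub:
  assumes i: "i < I"
  shows "\<phi> k i \<le> \<phi>ub"
proof -
  have "\<phi> k i \<le> Max ((\<lambda>i. \<phi> k i) ` {..<I})"
    using i by (intro Max_ge) auto
  also have "\<dots> \<le> \<phi>ub"
    unfolding \<phi>ub_def using \<phi>_upper_bound index_set_nonempty
    by (intro cSUP_upper bdd_aboveI2[where M="real I - \<kappa> ^ ((I - 1) * B)"] Max.boundedI) auto
  finally show ?thesis .
qed

lemma \<phi>lb_pos: "0 < \<phi>lb"
  using \<phi>lb_lower_bound \<kappa>_pos by (meson less_le_trans zero_less_power)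

definition \<kappa>t :: real where
  "\<kappa>t = \<kappa> * \<phi>lb / \<phi>ub"

lemma \<kappa>t_pos: "0 < \<kappa>t"
proof -
  have "0 < \<phi>ub"
    using \<phi>_le_\<phi>ub[of 0 0] \<phi>_0[of 0] I_ge_2 by simp
  then show ?thesis
    unfolding \<kappa>t_def using \<kappa>_pos \<phi>lb_pos by simp
qed

definition W :: "nat \<Rightarrow> nat \<Rightarrow> nat \<Rightarrow> real" where
  "W k i j = A k i j * \<phi> k j / \<phi> (Suc k) i"

lemma W_ge:
  assumes ij: "i < I" "j < I" and A_ge: "\<kappa> \<le> A k i j"
  shows "\<kappa>t \<le> W k i j"
proof -
  have "\<kappa> * \<phi>lb \<le> A k i j * \<phi> k j"
    using ij A_ge \<phi>lb_le \<phi>lb_pos \<kappa>_pos by (intro mult_mono) auto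
  then show ?thesis
    unfolding \<kappa>t_def W_def using ij \<phi>_pos \<phi>_le_\<phi>ub A_nonneg \<phi>_nonneg
    by (intro frac_le) auto
qed

lemma W_averaging: "B_connected_averaging I B E W \<kappa>t"
proof
  show "0 \<le> W k i j" if "i < I" "j < I" for k i j
    unfolding W_def using that A_nonneg \<phi>_nonneg \<phi>_pos by (simp add: less_imp_le)
  show "(\<Sum>j<I. W k i j) = 1" if "i < I" for k i
    unfolding W_def using that \<phi>_pos[of i "Suc k"] by (simp add: sum_divide_distrib[symmetric] \<phi>_Suc)
qed (use I_ge_2 B_conn \<kappa>t_pos W_ge A_diag_ge A_edge_ge in auto)

sublocale avg: B_connected_averaging I B E W \<kappa>t
  by (rule W_averaging)

lemma consensus_error_le:
  fixes x \<epsilon> :: "nat \<Rightarrow> nat \<Rightarrow> 'a::real_normed_vector"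
  assumes x_Suc: "\<And>k i. i < I \<Longrightarrow> x (Suc k) i =
      (1 / \<phi> (Suc k) i) *\<^sub>R (\<Sum>j<I. (A k i j * \<phi> k j) *\<^sub>R x k j) + \<epsilon> k i"
    and i: "i < I"
  shows "norm (x k i - (1 / real I) *\<^sub>R (\<Sum>j<I. \<phi> k j *\<^sub>R x k j))
    \<le> 2 / (1 - \<kappa>t ^ ((I - 1) * B)) * (avg.rate ^ k * stacked_norm I (x 0)
        + (\<Sum>t<k. avg.rate ^ (k - 1 - t) * stacked_norm I (\<epsilon> t)))"
proof -
  let ?C = "2 / (1 - \<kappa>t ^ ((I - 1) * B))"
  define dev where "dev y = y i - (1 / real I) *\<^sub>R (\<Sum>j<I. \<phi> k j *\<^sub>R y j)" for y :: "nat \<Rightarrow> 'a"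
  define P where "P t = evolve I W (Suc t) (\<epsilon> t) (k - Suc t)" for t
  have "x (Suc k) i = (\<Sum>j<I. W k i j *\<^sub>R x k j) + \<epsilon> k i" if "i < I" for k i
    using x_Suc[OF that] by (simp add: W_def scaleR_sum_right)
  then have x_k: "x k j = evolve I W 0 (x 0) k j + (\<Sum>t<k. P t j)" if "j < I" for j
    unfolding P_def using that by (rule affine_recursion_superposition)
  have "(\<Sum>j<I. \<phi> k j *\<^sub>R x k j)
      = (\<Sum>j<I. \<phi> k j *\<^sub>R evolve I W 0 (x 0) k j + (\<Sum>t<k. \<phi> k j *\<^sub>R P t j))"
    by (rule sum.cong) (simp_all add: x_k scaleR_add_right scaleR_sum_right)
  also have "\<dots> = (\<Sum>j<I. \<phi> k j *\<^sub>R evolve I W 0 (x 0) k j) + (\<Sum>t<k. \<Sum>j<I. \<phi> k j *\<^sub>R P t j)"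
    by (simp add: sum.distrib sum.swap[of _ "{..<k}"])
  finally have "dev (x k) = dev (evolve I W 0 (x 0) k) + (\<Sum>t<k. dev (P t))"
    unfolding dev_def using x_k[OF i]
    by (simp add: sum_subtractf scaleR_add_right scaleR_sum_right)
  then have "norm (dev (x k)) \<le> norm (dev (evolve I W 0 (x 0) k)) + (\<Sum>t<k. norm (dev (P t)))"
    by (metis norm_sum norm_triangle_mono order_refl)
  also have "\<dots> \<le> ?C * (avg.rate ^ k * stacked_norm I (x 0))
      + (\<Sum>t<k. ?C * (avg.rate ^ (k - 1 - t) * stacked_norm I (\<epsilon> t)))"
  proof (intro add_mono sum_mono)
    show "norm (dev (evolve I W 0 (x 0) k)) \<le> ?C * (avg.rate ^ k * stacked_norm I (x 0))"
      unfolding dev_def using \<phi>_nonneg \<phi>_sum i by (intro avg.evolve_deviation_le) auto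
    show "norm (dev (P t)) \<le> ?C * (avg.rate ^ (k - 1 - t) * stacked_norm I (\<epsilon> t))" for t
      unfolding dev_def P_def diff_Suc_eq_diff_pred[symmetric] using \<phi>_nonneg \<phi>_sum i
      by (intro avg.evolve_deviation_le) auto
  qed
  finally show ?thesis
    unfolding dev_def by (simp add: sum_distrib_left distrib_left)
qed

end

theorem mainTheorem11:
  fixes I B :: nat and \<kappa> :: real
    and E :: "nat \<Rightarrow> (nat \<times> nat) set"
    and A :: "nat \<Rightarrow> nat \<Rightarrow> nat \<Rightarrow> real"
    and \<phi> :: "nat \<Rightarrow> nat \<Rightarrow> real"
    and x \<epsilon> :: "nat \<Rightarrow> nat \<Rightarrow> real ^ 'm"
  assumes I2: "I \<ge> 2"
    and \<kappa>pos: "\<kappa> > 0"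
    and Esub: "\<And>k. E k \<subseteq> {..<I} \<times> {..<I}"
    and Bconn: "B_strongly_connected I B E"
    and comp: "\<And>k. compliant I \<kappa> (E k) (A k)"
    and colst: "\<And>k. column_stochastic I (A k)"
    and phi0: "\<And>i. i < I \<Longrightarrow> \<phi> 0 i = 1"
    and phiS: "\<And>k i. i < I \<Longrightarrow> \<phi> (Suc k) i = (\<Sum>j<I. A k i j * \<phi> k j)"
    and xS: "\<And>k i. i < I \<Longrightarrow> x (Suc k) i =
               (1 / \<phi> (Suc k) i) *\<^sub>R (\<Sum>j<I. (A k i j * \<phi> k j) *\<^sub>R x k j) + \<epsilon> k i"
  shows "let \<phi>lb = (INF k. Min ((\<lambda>i. \<phi> k i) ` {..<I}));
             \<phi>ub = (SUP k. Max ((\<lambda>i. \<phi> k i) ` {..<I}));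
             n = (I - 1) * B;
             \<kappa>t = \<kappa> * \<phi>lb / \<phi>ub;
             \<rho> = (1 - \<kappa>t ^ n) powr (1 / real n);
             c = (2 * real I / \<rho>) * (2 * (1 + inverse (\<kappa>t ^ n)) / (1 - \<kappa>t ^ n))
         in \<phi>lb \<ge> \<kappa> ^ (2 * (I - 1) * B) \<and> \<phi>ub \<le> real I - \<kappa> ^ (2 * (I - 1) * B) \<and>
            0 < \<rho> \<and> \<rho> < 1 \<and>
            (\<forall>k. \<forall>i<I.
               norm (x k i - (1 / real I) *\<^sub>R (\<Sum>j<I. \<phi> k j *\<^sub>R x k j))
                 \<le> c * (\<rho> ^ k * stacked_norm I (x 0)
                        + (\<Sum>t<k. \<rho> ^ (k - 1 - t) * stacked_norm I (\<epsilon> t))))"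
proof -
  interpret push_sum I B \<kappa> E A \<phi>
    using I2 \<kappa>pos Bconn comp colst phi0 phiS by unfold_locales
  let ?q = "\<kappa>t ^ ((I - 1) * B)" and ?\<rho> = avg.rate
  have \<kappa>_power: "\<kappa> ^ (2 * (I - 1) * B) \<le> \<kappa> ^ ((I - 1) * B)"
    using \<kappa>_pos \<kappa>_le_1 by (intro power_decreasing) auto
  have q: "0 < ?q" "?q < 1"
    using \<kappa>t_pos avg.window_power_lt_1 by simp_all
  let ?c = "(2 * real I / ?\<rho>) * (2 * (1 + inverse ?q) / (1 - ?q))"
  have "1 * (2 / (1 - ?q)) \<le> ?c"
    using q I2 avg.rate_pos avg.rate_le_1
    by (intro mult_mono divide_right_mono) (auto simp: pos_le_divide_eq)
  then have "norm (x k i - (1 / real I) *\<^sub>R (\<Sum>j<I. \<phi> k j *\<^sub>R x k j))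
      \<le> ?c * (?\<rho> ^ k * stacked_norm I (x 0) + (\<Sum>t<k. ?\<rho> ^ (k - 1 - t) * stacked_norm I (\<epsilon> t)))"
    if "i < I" for k i
    using avg.rate_pos
    by (intro order.trans[OF consensus_error_le[OF xS that] mult_right_mono])
      (auto intro!: add_nonneg_nonneg sum_nonneg simp: stacked_norm_nonneg)
  then show ?thesis
    unfolding Let_def \<phi>lb_def[symmetric] \<phi>ub_def[symmetric] \<kappa>t_def[symmetric] avg.rate_def[symmetric]
    using \<phi>lb_lower_bound \<phi>ub_upper_bound \<kappa>_power avg.rate_pos avg.rate_lt_1[OF \<kappa>t_pos] by auto
qed

end
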